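(* Let $d\ge2$ and $m=2^{d-1}$. The $d$-layer skip RNN graph with skip lengths $k_l=2^{l-1}$ ($l=1,\dots,d$) and the $d$-layer dilated RNN graph with dilations $s_l=2^{l-1}$ ($l=1,\dots,d$) have the same values of $\mathcal d_i(n)$ for all $i\in\mathbb Z$ and $1\le n\le m$, and hence the same mean recurrent length with period $m$.
   Context: Dilated RNN graph with dilations $s_1,\dots,s_d$: vertex set $\{x_t: t\in\mathbb Z\}\cup\{c^{(l)}_t: t\in\mathbb Z,\ 1\le l\le d\}$, edges $x_t\to c^{(1)}_t$, $c^{(l)}_t\to c^{(l+1)}_t$ for $1\le l<d$, and $c^{(l)}_t\to c^{(l)}_{t+s_l}$ for $1\le l\le d$ (all edges). Skip RNN graph with skip lengths $k_1,\dots,k_d$: same vertex set and the same edges $x_t\to c^{(1)}_t$, $c^{(l)}_t\to c^{(l+1)}_t$, together with both $c^{(l)}_t\to c^{(l)}_{t+1}$ and $c^{(l)}_t\to c^{(l)}_{t+k_l}$ for each $l$ (all edges). In both graphs $x_t$ is the input and $c^{(d)}_t$ the output at time $t$; $\mathcal d_i(n)$ is the number of edges of a shortest directed path from $x_i$ to $c^{(d)}_{i+n}$; the mean recurrent length with period $m$ is $\bar{\mathcal d}=\frac1m\sum_{n=1}^{m}\max_{i\in\mathbb Z}\mathcal d_i(n)$. *)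

theory Defs
  imports Complex_Main
begin

text \<open>Vertices: input x_t, and hidden states c^(l)_t (layer l, time t).\<close>
datatype vtx = X int | C nat int

definition dilated_edges :: "nat \<Rightarrow> (nat \<Rightarrow> nat) \<Rightarrow> (vtx \<times> vtx) set" where
  "dilated_edges d s =
     {(X t, C 1 t) | t. True}
   \<union> {(C l t, C (l + 1) t) | l t. 1 \<le> l \<and> l < d}
   \<union> {(C l t, C l (t + int (s l))) | l t. 1 \<le> l \<and> l \<le> d}"

definition skip_edges :: "nat \<Rightarrow> (nat \<Rightarrow> nat) \<Rightarrow> (vtx \<times> vtx) set" where
  "skip_edges d k =
     {(X t, C 1 t) | t. True}
   \<union> {(C l t, C (l + 1) t) | l t. 1 \<le> l \<and> l < d}
   \<union> {(C l t, C l (t + 1)) | l t. 1 \<le> l \<and> l \<le> d}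
   \<union> {(C l t, C l (t + int (k l))) | l t. 1 \<le> l \<and> l \<le> d}"

definition shortest_path_len :: "(vtx \<times> vtx) set \<Rightarrow> vtx \<Rightarrow> vtx \<Rightarrow> nat" where
  "shortest_path_len E u v = (LEAST k. (u, v) \<in> E ^^ k)"

definition rec_dist :: "(vtx \<times> vtx) set \<Rightarrow> nat \<Rightarrow> int \<Rightarrow> nat \<Rightarrow> nat" where
  "rec_dist E d i n = shortest_path_len E (X i) (C d (i + int n))"

definition mean_rec_len :: "(vtx \<times> vtx) set \<Rightarrow> nat \<Rightarrow> nat \<Rightarrow> real" where
  "mean_rec_len E d m = (1 / real m) * (\<Sum>n = 1..m. (SUP i::int. real (rec_dist E d i n)))"

end

theory Submission
  imports Defs
begin

text \<open>
  Every dilated edge is a skip edge, so skip distances never exceed dilated ones.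
  Conversely, as long as the first dilation is 1, the extra unit edges c^(l)_t \<rightarrow> c^(l)_(t+1)
  of the skip graph shorten no path starting at an input: if x_i reaches c^(l)_t in k dilated
  steps, then it reaches c^(l)_(t+1) in k + 1 dilated steps, by shifting the path one time step
  forward and spending the extra edge on layer 1, where the dilation is 1.
  Hence reachability from inputs in exactly k steps is the same in both graphs.
\<close>

lemma relpow_mono:
  fixes R S :: "'a rel"
  shows "R \<subseteq> S \<Longrightarrow> R ^^ n \<subseteq> S ^^ n"
  by (induction n) auto

lemma dilated_edges_subset_skip_edges: "dilated_edges d s \<subseteq> skip_edges d s"
  unfolding dilated_edges_def skip_edges_def by auto

lemma dilated_edge_into_C:
  assumes "(w, C l t) \<in> dilated_edges d s"
  obtains "w = X t" "l = 1"
    | "w = C (l - 1) t" "2 \<le> l" "l \<le> d"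
    | "w = C l (t - int (s l))" "1 \<le> l" "l \<le> d"
  using assms unfolding dilated_edges_def by fastforce

lemma dilated_relpow_from_input_shift:
  assumes "s 1 = 1"
    and "(X i, C l t) \<in> dilated_edges d s ^^ k" "1 \<le> l" "l \<le> d"
  shows "(X i, C l (t + 1)) \<in> dilated_edges d s ^^ Suc k"
  using assms(2-4)
proof (induction k arbitrary: l t)
  case 0
  then show ?case by simp
next
  case (Suc k)
  let ?E = "dilated_edges d s"
  from Suc.prems(1) obtain w where w: "(X i, w) \<in> ?E ^^ k" "(w, C l t) \<in> ?E"
    by auto
  from w(2) show ?case
  proof (cases rule: dilated_edge_into_C)
    case 1
    have "(C l t, C l (t + 1)) \<in> ?E"
      using 1 Suc.prems(3) assms(1) unfolding dilated_edges_def by auto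
    then show ?thesis using Suc.prems(1) by auto
  next
    case 2
    have "(X i, C (l - 1) (t + 1)) \<in> ?E ^^ Suc k"
      using Suc.IH[of "l - 1" t] 2 w(1) by auto
    moreover have "(C (l - 1) (t + 1), C l (t + 1)) \<in> ?E"
      using 2 unfolding dilated_edges_def by force
    ultimately show ?thesis by auto
  next
    case 3
    have "(X i, C l (t - int (s l) + 1)) \<in> ?E ^^ Suc k"
      using Suc.IH[of l "t - int (s l)"] 3 w(1) by auto
    moreover have "(C l (t - int (s l) + 1), C l (t + 1)) \<in> ?E"
      using 3 unfolding dilated_edges_def by force
    ultimately show ?thesis by auto
  qed
qed

lemma skip_relpow_from_input_imp_dilated:
  assumes "s 1 = 1" and "(X i, v) \<in> skip_edges d s ^^ k"
  shows "(X i, v) \<in> dilated_edges d s ^^ k"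
  using assms(2)
proof (induction k arbitrary: v)
  case 0
  then show ?case by simp
next
  case (Suc k)
  from Suc.prems obtain w where w: "(X i, w) \<in> skip_edges d s ^^ k" "(w, v) \<in> skip_edges d s"
    by auto
  have w_dilated: "(X i, w) \<in> dilated_edges d s ^^ k"
    using Suc.IH w(1) .
  show ?case
  proof (cases "(w, v) \<in> dilated_edges d s")
    case True
    then show ?thesis using w_dilated by auto
  next
    case False
    with w(2) obtain l t where "w = C l t" "v = C l (t + 1)" "1 \<le> l" "l \<le> d"
      unfolding skip_edges_def dilated_edges_def by auto
    then show ?thesis
      using dilated_relpow_from_input_shift[where s = s, OF assms(1)] w_dilated by auto
  qed
qed

lemma skip_relpow_from_input_iff_dilated:
  assumes "s 1 = 1"
  shows "(X i, v) \<in> skip_edges d s ^^ k \<longleftrightarrow> (X i, v) \<in> dilated_edges d s ^^ k"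
  using skip_relpow_from_input_imp_dilated[where s = s, OF assms]
    relpow_mono[OF dilated_edges_subset_skip_edges] by blast

lemma rec_dist_skip_eq_dilated:
  assumes "s 1 = 1"
  shows "rec_dist (skip_edges d s) d i n = rec_dist (dilated_edges d s) d i n"
  unfolding rec_dist_def shortest_path_len_def
  by (simp add: skip_relpow_from_input_iff_dilated[where s = s, OF assms])

lemma mean_rec_len_skip_eq_dilated:
  assumes "s 1 = 1"
  shows "mean_rec_len (skip_edges d s) d m = mean_rec_len (dilated_edges d s) d m"
  unfolding mean_rec_len_def by (simp add: rec_dist_skip_eq_dilated[where s = s, OF assms])

theorem mainTheorem5:
  fixes d m :: nat
  assumes "d \<ge> 2" and "m = 2 ^ (d - 1)"
  shows "(\<forall>i::int. \<forall>n. 1 \<le> n \<and> n \<le> m \<longrightarrow>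
            rec_dist (skip_edges d (\<lambda>l. 2 ^ (l - 1))) d i n
          = rec_dist (dilated_edges d (\<lambda>l. 2 ^ (l - 1))) d i n)
       \<and> mean_rec_len (skip_edges d (\<lambda>l. 2 ^ (l - 1))) d m
          = mean_rec_len (dilated_edges d (\<lambda>l. 2 ^ (l - 1))) d m"
proof -
  let ?s = "\<lambda>l::nat. 2 ^ (l - 1) :: nat"
  have first_dilation: "?s 1 = 1"
    by simp
  show ?thesis
    using rec_dist_skip_eq_dilated[where s = ?s, OF first_dilation]
      mean_rec_len_skip_eq_dilated[where s = ?s, OF first_dilation] by blast
qed

end
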